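(* Let $(u_k)_{k\ge1}$ be defined by $u_k=k$ for $k\in\{1,2,3\}$ and $u_k=2u_{k-2}$ for $k\ge4$. For $k\ge1$, let $\omega_k$ be the largest integer such that every 1-dimensional error pattern at level $k$ with at most $\omega_k$ edges is decoded correctly by the 1-dimensional renormalisation decoder. Then $\omega_k=u_k-1$ for all $k\ge1$.
   Context: 1-dimensional model. For $j\ge0$, the line at level $j$ is the cycle with vertex set $\mathbb{Z}/2^j\mathbb{Z}$ and edges $\epsilon_v=\{v,v+1\}$, $v\in\mathbb{Z}/2^j\mathbb{Z}$ (for $j=0$ it is a single vertex with one loop edge). A 1-dimensional error pattern at level $j$ is a subset of these edges; its weight is its number of edges; its syndrome is the set of vertices incident to an odd number of its edges (a loop counts twice). At level $j+1$, the blocks are the pairs consisting of the left edge $\{2m,2m+1\}$ and right edge $\{2m+1,2m+2\}$, $m\in\mathbb{Z}/2^j\mathbb{Z}$; block $m$ corresponds to edge $\{m,m+1\}$ at level $j$. One reduction stage applied to a pattern $\mathbf{f}$ at level $j+1$ with syndrome $S$: (a) for every block, if both endpoints $2m+1,2m+2$ of its right edge are in $S$, flip (add mod 2) the right edge and remove both vertices from $S$; (b) then, for every block, if its middle vertex $2m+1$ is still in $S$, flip its left edge. In the resulting pattern $\mathbf{f}'$ each block contains $0$ or $2$ edges; the image of $\mathbf{f}$ is the pattern at level $j$ containing edge $\{m,m+1\}$ iff block $m$ is contained in $\mathbf{f}'$. A pattern $\mathbf{f}$ at level $j+1$ is a (1-dimensional) preimage of a pattern $\mathbf{g}$ at level $j$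 if the image of $\mathbf{f}$ is $\mathbf{g}$. The 1-dimensional decoder applies $k$ successive reduction stages to a pattern at level $k$, ending with a pattern at level $0$ that is either empty or the loop edge; the original pattern is decoded correctly iff the final pattern is empty. (This is exactly the behaviour of the two-dimensional renormalisation decoder of the toric code on $\mathbb{Z}/2^k\times\mathbb{Z}/2^k$ restricted to errors supported on the horizontal line $\{(x,0)\}$, where being wrongly decoded means that error plus correction is that whole homologically non-trivial line.) *)

theory Defs
  imports Main
begin

text \<open>Line at level j: vertices 0..<2^j (representing Z/2^j), edge v (v < 2^j)
  joins v and (v+1) mod 2^j.  A pattern is a set of edge indices.\<close>

definition edges :: "nat \<Rightarrow> nat set" where
  "edges j = {..<2^j}"

text \<open>Number of incidences of vertex w with edges of f (a loop counts twice).\<close>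
definition incid :: "nat \<Rightarrow> nat set \<Rightarrow> nat \<Rightarrow> nat" where
  "incid j f w = card {v \<in> f. v = w} + card {v \<in> f. (v + 1) mod 2^j = w}"

definition syndrome :: "nat \<Rightarrow> nat set \<Rightarrow> nat set" where
  "syndrome j f = {w. w < 2^j \<and> odd (incid j f w)}"

text \<open>One reduction stage from level j+1 to level j.  Block m (m < 2^j) consists of
  left edge 2m = {2m,2m+1} and right edge 2m+1 = {2m+1, 2m+2}.\<close>
definition stage_A :: "nat \<Rightarrow> nat set \<Rightarrow> nat set" where
  "stage_A j f = {m. m < 2^j \<and> 2*m+1 \<in> syndrome (Suc j) f
                     \<and> (2*m+2) mod 2^(Suc j) \<in> syndrome (Suc j) f}"

definition stage_S1 :: "nat \<Rightarrow> nat set \<Rightarrow> nat set" where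
  "stage_S1 j f = syndrome (Suc j) f -
     (\<Union>m\<in>stage_A j f. {2*m+1, (2*m+2) mod 2^(Suc j)})"

definition stage_B :: "nat \<Rightarrow> nat set \<Rightarrow> nat set" where
  "stage_B j f = {m. m < 2^j \<and> 2*m+1 \<in> stage_S1 j f}"

definition symdiff :: "'a set \<Rightarrow> 'a set \<Rightarrow> 'a set" where
  "symdiff A B = (A - B) \<union> (B - A)"

text \<open>Flipping = adding mod 2 = symmetric difference.\<close>
definition stage_fprime :: "nat \<Rightarrow> nat set \<Rightarrow> nat set" where
  "stage_fprime j f =
     symdiff (symdiff f ((\<lambda>m. 2*m+1) ` stage_A j f)) ((\<lambda>m. 2*m) ` stage_B j f)"

definition image_stage :: "nat \<Rightarrow> nat set \<Rightarrow> nat set" where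
  "image_stage j f = {m. m < 2^j \<and> 2*m \<in> stage_fprime j f \<and> 2*m+1 \<in> stage_fprime j f}"

fun decode :: "nat \<Rightarrow> nat set \<Rightarrow> nat set" where
  "decode 0 f = f"
| "decode (Suc j) f = decode j (image_stage j f)"

definition decoded_correctly :: "nat \<Rightarrow> nat set \<Rightarrow> bool" where
  "decoded_correctly k f \<longleftrightarrow> decode k f = {}"

definition omega :: "nat \<Rightarrow> nat" where
  "omega k = (GREATEST w. \<forall>f. f \<subseteq> edges k \<and> card f \<le> w \<longrightarrow> decoded_correctly k f)"

fun u :: "nat \<Rightarrow> nat" where
  "u 0 = 0"
| "u (Suc 0) = 1"
| "u (Suc (Suc 0)) = 2"
| "u (Suc (Suc (Suc 0))) = 3"
| "u (Suc (Suc (Suc (Suc k)))) = 2 * u (Suc (Suc k))"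

end

theory Submission
  imports Defs
begin

(* One reduction stage is a majority vote: block m of the image is present iff at least two of the
   edges 2m, 2m+1, 2m+2 (indices mod 2^(j+1)) are.  So two stages keep block i iff the nested
   majority of the seven edges 4i, ..., 4i+6 holds, and an amortised count shows that two stages
   at least halve the weight of a pattern.  As wrongly decoded patterns at levels 1, 2, 3 need 1, 2
   and 3 edges, a wrongly decoded pattern at level k has at least u k edges.  Conversely, a run of
   2 (or 3) consecutive edges is the two-stage image of two such runs two levels up; iterating
   from a single wrongly decoded run yields wrongly decoded patterns of weight u k. *)

definition majority :: "bool \<Rightarrow> bool \<Rightarrow> bool \<Rightarrow> bool" where
  "majority a b c \<longleftrightarrow> a \<and> b \<or> a \<and> c \<or> b \<and> c"

lemma syndrome_Suc_mod_iff:
  assumes "f \<subseteq> {..<2^j}"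
  shows "(p + 1) mod 2^j \<in> syndrome j f \<longleftrightarrow> ((p + 1) mod 2^j \<in> f) \<noteq> (p mod 2^j \<in> f)"
proof -
  let ?N = "2^j :: nat"
  let ?w = "(p + 1) mod ?N"
  have "v = p mod ?N" if "v < ?N" "(v + 1) mod ?N = ?w" for v
    using that by (simp add: mod_Suc split: if_splits)
  then have "{v \<in> f. (v + 1) mod ?N = ?w} = f \<inter> {p mod ?N}"
    using assms mod_add_left_eq[of p ?N 1] by blast
  moreover have "{v \<in> f. v = ?w} = f \<inter> {?w}"
    by blast
  ultimately have "incid j f ?w = of_bool (?w \<in> f) + of_bool (p mod ?N \<in> f)"
    unfolding incid_def by (simp add: Int_insert_right)
  then show ?thesis
    by (simp add: syndrome_def)
qed

lemma mem_stage_A_iff: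
  assumes "f \<subseteq> {..<2^Suc j}"
  shows "m \<in> stage_A j f \<longleftrightarrow>
    m < 2^j \<and> (2*m+1 \<in> f) \<noteq> (2*m \<in> f) \<and> ((2*m+2) mod 2^Suc j \<in> f) \<noteq> (2*m+1 \<in> f)"
proof -
  have "2*m+1 \<in> syndrome (Suc j) f \<longleftrightarrow> (2*m+1 \<in> f) \<noteq> (2*m \<in> f)" if "m < 2^j"
    using syndrome_Suc_mod_iff[OF assms, of "2*m"] that by simp
  moreover have "(2*m+2) mod 2^Suc j \<in> syndrome (Suc j) f \<longleftrightarrow>
      ((2*m+2) mod 2^Suc j \<in> f) \<noteq> (2*m+1 \<in> f)" if "m < 2^j"
    using syndrome_Suc_mod_iff[OF assms, of "2*m+1"] that by simp
  ultimately show ?thesis unfolding stage_A_def by auto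
qed

lemma mem_stage_B_iff:
  "m \<in> stage_B j f \<longleftrightarrow> m < 2^j \<and> 2*m+1 \<in> syndrome (Suc j) f \<and> m \<notin> stage_A j f"
proof -
  have "(2*m'+2) mod 2^Suc j = 2 * ((m'+1) mod 2^j)" for m' :: nat
    by (simp add: mult_mod_right)
  then have "2*m+1 \<noteq> (2*m'+2) mod 2^Suc j" for m'
    by (metis even_mult_iff even_add even_two_times_div_two odd_one dvd_triv_left)
  then show ?thesis unfolding stage_B_def stage_S1_def by auto
qed

lemma even_mem_stage_fprime_iff: "2*m \<in> stage_fprime j f \<longleftrightarrow> (2*m \<in> f) \<noteq> (m \<in> stage_B j f)"
  unfolding stage_fprime_def symdiff_def by auto presburger+

lemma odd_mem_stage_fprime_iff: "2*m+1 \<in> stage_fprime j f \<longleftrightarrow> (2*m+1 \<in> f) \<noteq> (m \<in> stage_A j f)"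
  unfolding stage_fprime_def symdiff_def by auto presburger+

lemma image_stage_subset: "image_stage j f \<subseteq> {..<2^j}"
  unfolding image_stage_def by auto

lemma image_stage_iff_majority:
  assumes f: "f \<subseteq> {..<2^Suc j}" and m: "m < 2^j"
  shows "m \<in> image_stage j f \<longleftrightarrow> majority (2*m \<in> f) (2*m+1 \<in> f) ((2*m+2) mod 2^Suc j \<in> f)"
proof -
  let ?x0 = "2*m \<in> f" and ?x1 = "2*m+1 \<in> f" and ?x2 = "(2*m+2) mod 2^Suc j \<in> f"
  have A: "m \<in> stage_A j f \<longleftrightarrow> ?x1 \<noteq> ?x0 \<and> ?x2 \<noteq> ?x1"
    using mem_stage_A_iff[OF f] m by simp
  have "2*m+1 \<in> syndrome (Suc j) f \<longleftrightarrow> ?x1 \<noteq> ?x0"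
    using syndrome_Suc_mod_iff[OF f, of "2*m"] m by simp
  then have B: "m \<in> stage_B j f \<longleftrightarrow> ?x1 \<noteq> ?x0 \<and> ?x2 = ?x1"
    using A m unfolding mem_stage_B_iff by blast
  have "m \<in> image_stage j f \<longleftrightarrow> (?x0 \<noteq> (m \<in> stage_B j f)) \<and> (?x1 \<noteq> (m \<in> stage_A j f))"
    unfolding image_stage_def even_mem_stage_fprime_iff odd_mem_stage_fprime_iff using m by simp
  then show ?thesis
    unfolding A B majority_def by blast
qed

lemma mod_mem_image_stage_iff:
  assumes "f \<subseteq> {..<2^Suc j}"
  shows "i mod 2^j \<in> image_stage j f \<longleftrightarrow>
    majority ((2*i) mod 2^Suc j \<in> f) ((2*i+1) mod 2^Suc j \<in> f) ((2*i+2) mod 2^Suc j \<in> f)"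
proof -
  let ?m = "i mod 2^j"
  have twice: "(2*i) mod 2^Suc j = 2 * ?m"
    by (metis mult_mod_right power_Suc)
  have twice_Suc: "(2*i+1) mod 2^Suc j = 2 * ?m + 1"
    using mod_mult2_eq[of "2*i+1" 2 "2^j"] by simp
  have twice_Suc2: "(2*i+2) mod 2^Suc j = (2 * ?m + 2) mod 2^Suc j"
    by (metis twice mod_add_left_eq)
  show ?thesis
    unfolding twice twice_Suc twice_Suc2 by (rule image_stage_iff_majority[OF assms]) simp
qed

lemma image_stage_mono:
  assumes "f \<subseteq> f'" and "f' \<subseteq> {..<2^Suc j}"
  shows "image_stage j f \<subseteq> image_stage j f'"
proof
  fix m
  assume m: "m \<in> image_stage j f"
  then have "m < 2^j"
    using image_stage_subset by blast
  with m assms show "m \<in> image_stage j f'"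
    by (simp add: image_stage_iff_majority majority_def) blast
qed

lemma decode_mono: "f \<subseteq> f' \<Longrightarrow> f' \<subseteq> edges k \<Longrightarrow> decode k f \<subseteq> decode k f'"
proof (induction k arbitrary: f f')
  case (Suc k)
  then have "image_stage k f \<subseteq> image_stage k f'"
    by (intro image_stage_mono) (auto simp: edges_def)
  then show ?case
    using Suc.IH image_stage_subset by (simp add: edges_def)
qed simp

lemma decode_empty: "decode k {} = {}"
proof -
  have "image_stage j {} = {}" for j
    using image_stage_iff_majority[of "{}" j] image_stage_subset[of j "{}"]
    by (auto simp: majority_def)
  then show ?thesis
    by (induction k) simp_all
qed

lemma image_stage_0: "e \<subseteq> {..<2} \<Longrightarrow> image_stage 0 e = e \<inter> {0}"
  using image_stage_subset[of 0 e] image_stage_iff_majority[of e 0 0]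
  by (auto simp: majority_def)

definition double_majority :: "(nat \<Rightarrow> bool) \<Rightarrow> bool" where
  "double_majority x \<longleftrightarrow>
     majority (majority (x 0) (x 1) (x 2)) (majority (x 2) (x 3) (x 4)) (majority (x 4) (x 5) (x 6))"

lemma mod_mem_image_stage_twice_iff:
  assumes f: "f \<subseteq> {..<2^Suc (Suc j)}"
  shows "i mod 2^j \<in> image_stage j (image_stage (Suc j) f) \<longleftrightarrow>
    double_majority (\<lambda>r. (4*i + r) mod 2^Suc (Suc j) \<in> f)"
  unfolding mod_mem_image_stage_iff[OF image_stage_subset] mod_mem_image_stage_iff[OF f]
    double_majority_def
  by (simp add: algebra_simps numeral_eq_Suc)

lemma double_majority_window:
  "2 * of_bool (double_majority x) + of_bool (\<not> x 4 \<and> \<not> x 5)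
     \<le> (\<Sum>r<4. of_bool (x r)) + (of_bool (\<not> x 0 \<and> \<not> x 1) :: nat)"
  by (cases "x 0"; cases "x 1"; cases "x 2"; cases "x 3"; cases "x 4"; cases "x 5"; cases "x 6")
    (simp_all add: double_majority_def majority_def numeral_eq_Suc)

lemma double_majority_card:
  "double_majority x \<Longrightarrow> 3 \<le> (\<Sum>r<7. of_bool (x r) :: nat)"
  by (cases "x 0"; cases "x 1"; cases "x 2"; cases "x 3"; cases "x 4"; cases "x 5"; cases "x 6")
    (simp_all add: double_majority_def majority_def numeral_eq_Suc)

lemma card_eq_sum_of_bool:
  fixes A :: "nat set"
  assumes "A \<subseteq> {..<n}"
  shows "card A = (\<Sum>i<n. of_bool (i \<in> A) :: nat)"
  using assms by (simp add: Int_absorb1)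

(* Summing double_majority_window over the blocks m of the cycle: the correction terms
   Psi m, which record that the edges 4m and 4m+1 are both missing, telescope. *)
lemma card_image_stage_twice:
  assumes f: "f \<subseteq> {..<2^Suc (Suc j)}"
  shows "2 * card (image_stage j (image_stage (Suc j) f)) \<le> card f"
proof -
  let ?M = "2^j :: nat" and ?N = "2^Suc (Suc j) :: nat"
  let ?g = "image_stage j (image_stage (Suc j) f)"
  define x where "x i \<longleftrightarrow> i mod ?N \<in> f" for i
  define Psi :: "nat \<Rightarrow> nat" where "Psi m = of_bool (\<not> x (4*m) \<and> \<not> x (4*m+1))" for m
  have window: "2 * of_bool (m \<in> ?g) + Psi (Suc m) \<le> (\<Sum>i\<in>{m*4..<m*4+4}. of_bool (x i)) + Psi m"
    if "m < ?M" for m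
  proof -
    have mem: "m \<in> ?g \<longleftrightarrow> double_majority (\<lambda>r. x (4*m + r))"
      using mod_mem_image_stage_twice_iff[OF f, of m] that by (simp add: x_def)
    have block: "(\<Sum>i\<in>{m*4..<m*4+4}. of_bool (x i)) = (\<Sum>r<4. of_bool (x (4*m + r)))"
      by (simp only: sum.atLeastLessThan_shift_0 atLeast0LessThan mult.commute) simp
    have Psi: "Psi m = of_bool (\<not> x (4*m+0) \<and> \<not> x (4*m+1))"
      "Psi (Suc m) = of_bool (\<not> x (4*m+4) \<and> \<not> x (4*m+5))"
      by (simp_all add: Psi_def algebra_simps numeral_eq_Suc)
    show ?thesis
      unfolding mem block Psi by (rule double_majority_window)
  qed
  have "Psi ?M = Psi 0"
    by (simp add: Psi_def x_def mod_Suc)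
  then have Psi_shift: "(\<Sum>m<?M. Psi (Suc m)) = (\<Sum>m<?M. Psi m)"
    using sum.lessThan_Suc_shift[of Psi ?M] sum.lessThan_Suc[of Psi ?M] by simp
  have "2 * card ?g + (\<Sum>m<?M. Psi (Suc m)) = (\<Sum>m<?M. 2 * of_bool (m \<in> ?g) + Psi (Suc m))"
    by (simp only: card_eq_sum_of_bool[OF image_stage_subset] sum.distrib sum_distrib_left)
  also have "\<dots> \<le> (\<Sum>m<?M. (\<Sum>i\<in>{m*4..<m*4+4}. of_bool (x i)) + Psi m)"
    using window by (intro sum_mono) simp
  also have "\<dots> = (\<Sum>i<?M*4. of_bool (x i)) + (\<Sum>m<?M. Psi m)"
    by (simp only: sum.distrib sum.nat_group)
  also have "(\<Sum>i<?M*4. of_bool (x i)) = (\<Sum>i<?N. of_bool (i \<in> f))"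
    by (rule sum.cong) (simp_all add: x_def)
  also have "\<dots> = card f"
    using card_eq_sum_of_bool[OF f] by simp
  finally show ?thesis
    using Psi_shift by simp
qed

lemma card_pos_if_decode_nonempty:
  assumes "f \<subseteq> edges k" and "decode k f \<noteq> {}"
  shows "1 \<le> card f"
proof -
  have "finite f"
    using assms(1) finite_subset by (auto simp: edges_def)
  moreover have "f \<noteq> {}"
    using assms(2) decode_empty by blast
  ultimately show ?thesis
    by (simp add: Suc_le_eq card_gt_0_iff)
qed

lemma decode_Suc_Suc_nonemptyE:
  assumes "f \<subseteq> edges (Suc (Suc j))" and "decode (Suc (Suc j)) f \<noteq> {}"
  obtains g where "g \<subseteq> edges j" "decode j g \<noteq> {}" "2 * card g \<le> card f"
proof
  let ?g = "image_stage j (image_stage (Suc j) f)"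
  show "?g \<subseteq> edges j"
    unfolding edges_def by (rule image_stage_subset)
  show "decode j ?g \<noteq> {}"
    using assms(2) by simp
  show "2 * card ?g \<le> card f"
    using assms(1) by (intro card_image_stage_twice) (simp add: edges_def)
qed

lemma three_le_card_if_decode_3_nonempty:
  assumes "f \<subseteq> edges 3" and "decode 3 f \<noteq> {}"
  shows "3 \<le> card f"
proof -
  let ?g = "image_stage 1 (image_stage 2 f)"
  have f: "f \<subseteq> {..<2^Suc (Suc 1)}"
    using assms(1) by (simp add: edges_def)
  have "decode 3 f = image_stage 0 ?g"
    by (simp add: numeral_3_eq_3 numeral_2_eq_2)
  also have "\<dots> = ?g \<inter> {0}"
    using image_stage_subset[of 1] by (intro image_stage_0) simp
  finally have "0 mod 2^1 \<in> ?g"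
    using assms(2) by auto
  then have "double_majority (\<lambda>r. r mod 8 \<in> f)"
    using mod_mem_image_stage_twice_iff[OF f, of 0] by (simp add: numeral_2_eq_2)
  then have "3 \<le> (\<Sum>r<7. of_bool (r mod 8 \<in> f) :: nat)"
    by (rule double_majority_card)
  also have "\<dots> = (\<Sum>r<7. of_bool (r \<in> f))"
    by (rule sum.cong) simp_all
  also have "\<dots> \<le> (\<Sum>r<8. of_bool (r \<in> f))"
    by (rule sum_mono2) auto
  also have "\<dots> = card f"
    using f card_eq_sum_of_bool[of f 8] by simp
  finally show ?thesis .
qed

lemma u_Suc_Suc: "2 \<le> j \<Longrightarrow> u (Suc (Suc j)) = 2 * u j"
  by (cases j rule: u.cases) simp_all

lemma u_le_card_if_decode_nonempty:
  assumes "1 \<le> k" and "f \<subseteq> edges k" and "decode k f \<noteq> {}"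
  shows "u k \<le> card f"
  using assms
proof (induction k arbitrary: f rule: less_induct)
  case (less k)
  consider "k = 1" | "k = 3" | j where "k = Suc (Suc j)" "j \<noteq> 1"
    using less.prems(1) by (cases k rule: u.cases) (auto simp: numeral_3_eq_3)
  then show ?case
  proof cases
    case 1
    then show ?thesis
      using card_pos_if_decode_nonempty less.prems by simp
  next
    case 2
    then show ?thesis
      using three_le_card_if_decode_3_nonempty less.prems by (simp add: numeral_3_eq_3)
  next
    case (3 j)
    then obtain g where g: "g \<subseteq> edges j" "decode j g \<noteq> {}" "2 * card g \<le> card f"
      using decode_Suc_Suc_nonemptyE less.prems by metis
    show ?thesis
    proof (cases "j = 0")
      case True
      then show ?thesis
        using 3 g card_pos_if_decode_nonempty[OF g(1,2)] by (simp add: numeral_2_eq_2)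
    next
      case False
      then have "u j \<le> card g"
        using 3 g less.IH[of j g] by simp
      then show ?thesis
        using 3 False g(3) u_Suc_Suc[of j] by simp
    qed
  qed
qed

(* For c = 2 or 3, the run {b..<b+c} lies in the two-stage image of the runs starting at 4b+3
   and 4b+3c. *)
fun run_starts :: "nat \<Rightarrow> nat \<Rightarrow> nat \<Rightarrow> nat set" where
  "run_starts c a 0 = {a}"
| "run_starts c a (Suc n) = (\<lambda>b. 4*b + 3) ` run_starts c a n \<union> (\<lambda>b. 4*b + 3*c) ` run_starts c a n"

definition runs :: "nat \<Rightarrow> nat \<Rightarrow> nat \<Rightarrow> nat set" where
  "runs c a n = (\<Union>b\<in>run_starts c a n. {b..<b+c})"

lemma finite_run_starts: "finite (run_starts c a n)"
  by (induction n) simp_all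

lemma card_run_starts_le: "card (run_starts c a n) \<le> 2^n"
proof (induction n)
  case (Suc n)
  let ?S = "run_starts c a n"
  have "card (run_starts c a (Suc n)) \<le> card ((\<lambda>b. 4*b + 3) ` ?S) + card ((\<lambda>b. 4*b + 3*c) ` ?S)"
    by (simp add: card_Un_le)
  also have "\<dots> \<le> card ?S + card ?S"
    by (intro add_mono card_image_le finite_run_starts)
  finally show ?case
    using Suc.IH by simp
qed simp

lemma card_runs_le: "card (runs c a n) \<le> c * 2^n"
proof -
  have "card (runs c a n) \<le> (\<Sum>b\<in>run_starts c a n. card {b..<b+c})"
    unfolding runs_def by (rule card_UN_le[OF finite_run_starts])
  also have "\<dots> = c * card (run_starts c a n)"
    by simp
  also have "\<dots> \<le> c * 2^n"
    using card_run_starts_le by simp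
  finally show ?thesis .
qed

lemma run_starts_bound:
  assumes "1 \<le> c" and "a + c \<le> 2^L" and "b \<in> run_starts c a n"
  shows "b + c \<le> 2^(L + 2*n)"
  using assms(3)
proof (induction n arbitrary: b)
  case (Suc n)
  then obtain b' where "b' \<in> run_starts c a n" "b = 4*b' + 3 \<or> b = 4*b' + 3*c"
    by auto
  with Suc.IH have "b + c \<le> 4 * 2^(L + 2*n)"
    using assms(1) by fastforce
  then show ?case
    by (simp add: power_add)
qed (use assms(2) in simp)

lemma runs_subset_edges:
  assumes "1 \<le> c" and "a + c \<le> 2^L"
  shows "runs c a n \<subseteq> edges (L + 2*n)"
  using run_starts_bound[OF assms] by (fastforce simp: runs_def edges_def)

lemma run_subset_image_stage_twice:
  assumes c: "c = 2 \<or> c = 3" and b: "b + c \<le> 2^j" and F: "F \<subseteq> {..<2^Suc (Suc j)}"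
    and runs: "{4*b+3..<4*b+3+c} \<union> {4*b+3*c..<4*b+4*c} \<subseteq> F"
  shows "{b..<b+c} \<subseteq> image_stage j (image_stage (Suc j) F)"
proof
  fix i
  assume i: "i \<in> {b..<b+c}"
  define y where "y = (\<lambda>r. (4*i + r) mod 2^Suc (Suc j) \<in> F)"
  have hit: "y r" if "4*i + r \<in> {4*b+3..<4*b+3+c} \<union> {4*b+3*c..<4*b+4*c}" for r
  proof -
    have "4*i + r < 2^Suc (Suc j)"
      using that b by auto
    then show ?thesis
      using that runs by (auto simp: y_def)
  qed
  from c i consider "c = 2" "i = b" | "c = 2" "i = b+1" | "c = 3" "i = b" | "c = 3" "i = b+1"
    | "c = 3" "i = b+2"
    by fastforce
  then have "double_majority y"
    by cases (simp_all add: double_majority_def majority_def hit)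
  moreover have "i mod 2^j = i"
    using i b by simp
  ultimately show "i \<in> image_stage j (image_stage (Suc j) F)"
    using mod_mem_image_stage_twice_iff[OF F, of i] by (simp add: y_def)
qed

lemma runs_subset_image_stage_twice:
  assumes c: "c = 2 \<or> c = 3" and a: "a + c \<le> 2^L"
  shows "runs c a n \<subseteq> image_stage (L + 2*n) (image_stage (Suc (L + 2*n)) (runs c a (Suc n)))"
  unfolding runs_def[of c a n]
proof (rule UN_least)
  fix b
  assume b: "b \<in> run_starts c a n"
  have "1 \<le> c"
    using c by auto
  have "runs c a (Suc n) \<subseteq> {..<2^Suc (Suc (L + 2*n))}"
    using runs_subset_edges[OF \<open>1 \<le> c\<close> a, of "Suc n"] by (simp add: edges_def)
  moreover have "{4*b+3..<4*b+3+c} \<union> {4*b+3*c..<4*b+4*c} \<subseteq> runs c a (Suc n)"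
    using b by (fastforce simp: runs_def)
  ultimately show "{b..<b+c} \<subseteq> image_stage (L + 2*n) (image_stage (Suc (L + 2*n)) (runs c a (Suc n)))"
    using run_subset_image_stage_twice[OF c run_starts_bound[OF \<open>1 \<le> c\<close> a b]] by blast
qed

lemma decode_runs_nonempty:
  assumes c: "c = 2 \<or> c = 3" and a: "a + c \<le> 2^L" and base: "decode L (runs c a 0) \<noteq> {}"
  shows "decode (L + 2*n) (runs c a n) \<noteq> {}"
proof (induction n)
  case (Suc n)
  have "decode (L + 2*n) (runs c a n)
      \<subseteq> decode (L + 2*n) (image_stage (L + 2*n) (image_stage (Suc (L + 2*n)) (runs c a (Suc n))))"
    using runs_subset_image_stage_twice[OF c a] image_stage_subset
    by (intro decode_mono) (auto simp: edges_def)
  then show ?case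
    using Suc.IH by auto
qed (use base in simp)

(* The seeds are {0,1} at level 2 and {1,2,3} at level 3. *)
lemma decode_runs_base:
  assumes "c = 2 \<or> c = 3"
  shows "decode c (runs c (c - 2) 0) \<noteq> {}"
  using assms
proof
  assume c: "c = 2"
  have "0 mod 2^0 \<in> image_stage 0 (image_stage (Suc 0) {0..<2})"
    by (subst mod_mem_image_stage_twice_iff) (auto simp: double_majority_def majority_def)
  then show ?thesis
    using c by (auto simp: runs_def numeral_2_eq_2)
next
  assume c: "c = 3"
  let ?g = "image_stage 1 (image_stage 2 {1..<4})"
  have "0 mod 2^1 \<in> image_stage 1 (image_stage (Suc 1) {1..<4})"
    by (subst mod_mem_image_stage_twice_iff) (auto simp: double_majority_def majority_def)
  moreover have "?g \<subseteq> {..<2}"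
    using image_stage_subset[of 1] by simp
  ultimately have "image_stage 0 ?g \<noteq> {}"
    using image_stage_0 by (simp add: numeral_2_eq_2)
  moreover have "decode 3 {1..<4} = image_stage 0 ?g"
    by (simp add: numeral_3_eq_3 numeral_2_eq_2)
  ultimately show ?thesis
    using c by (simp add: runs_def)
qed

lemma u_add_twice: "2 \<le> k \<Longrightarrow> u (k + 2*n) = 2^n * u k"
  by (induction n) (simp_all add: u_Suc_Suc)

lemma exists_undecodable_pattern:
  assumes "1 \<le> k"
  obtains f where "f \<subseteq> edges k" "card f \<le> u k" "\<not> decoded_correctly k f"
proof (cases "k = 1")
  case True
  have "image_stage 0 {0} = {0}"
    by (simp add: image_stage_0)
  then show ?thesis
    using True by (intro that[of "{0}"]) (auto simp: edges_def decoded_correctly_def)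
next
  case False
  then have "\<exists>c n. (c = 2 \<or> c = 3) \<and> k = c + 2*n"
    using assms by presburger
  then obtain c n where c: "c = 2 \<or> c = 3" and k: "k = c + 2*n"
    by blast
  have base: "c - 2 + c \<le> 2^c" and "2 \<le> c" and "u c = c"
    using c by (auto simp: numeral_3_eq_3 numeral_2_eq_2)
  show ?thesis
  proof (rule that)
    show "runs c (c - 2) n \<subseteq> edges k"
      using runs_subset_edges[of c, OF _ base] \<open>2 \<le> c\<close> k by simp
    show "card (runs c (c - 2) n) \<le> u k"
      using card_runs_le[of c "c - 2" n] u_add_twice[OF \<open>2 \<le> c\<close>, of n] k \<open>u c = c\<close>
      by (simp add: mult.commute)
    show "\<not> decoded_correctly k (runs c (c - 2) n)"
      using decode_runs_nonempty[OF c base decode_runs_base[OF c]] k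
      by (simp add: decoded_correctly_def)
  qed
qed

lemma omega_eqI:
  assumes correct: "\<And>f. f \<subseteq> edges k \<Longrightarrow> card f < w \<Longrightarrow> decoded_correctly k f"
    and f: "f \<subseteq> edges k" "card f \<le> w" "\<not> decoded_correctly k f"
  shows "omega k = w - 1"
proof -
  have "1 \<le> card f"
    using f(1,3) card_pos_if_decode_nonempty unfolding decoded_correctly_def by blast
  with f(2) have "w - 1 < w"
    by simp
  then have "\<forall>f'. f' \<subseteq> edges k \<and> card f' \<le> w - 1 \<longrightarrow> decoded_correctly k f'"
    by (intro allI impI correct) auto
  moreover have "y \<le> w - 1" if "\<forall>f'. f' \<subseteq> edges k \<and> card f' \<le> y \<longrightarrow> decoded_correctly k f'" for y
  proof (rule ccontr)
    assume "\<not> y \<le> w - 1"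
    with f(2) have "card f \<le> y"
      by linarith
    with that f show False
      by blast
  qed
  ultimately show ?thesis
    unfolding omega_def by (rule Greatest_equality)
qed

theorem proposition4:
  fixes k :: nat
  assumes "k \<ge> 1"
  shows "omega k = u k - 1"
proof -
  obtain f where "f \<subseteq> edges k" "card f \<le> u k" "\<not> decoded_correctly k f"
    using exists_undecodable_pattern[OF assms] .
  moreover have "decoded_correctly k f'" if "f' \<subseteq> edges k" "card f' < u k" for f'
    using u_le_card_if_decode_nonempty[OF assms that(1)] that(2)
    by (auto simp: decoded_correctly_def)
  ultimately show ?thesis
    by (intro omega_eqI) auto
qed

end
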